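(* In the setting of the context (the canonical generalized multi-time Lagrange space associated with a quadratic multi-time Lagrangian, with its Cartan connection $C\Gamma$), the global generalized Einstein equations $Ric(C\Gamma)-\frac{Sc(C\Gamma)}{2}G=\mathcal{K}\mathcal{T}$, where $\mathcal{K}$ is a constant and $\mathcal{T}$ is a d-tensor with adapted components $\mathcal{T}_{AB}$, $A,B\in\{\alpha,\ i,\ {}^{(\alpha)}_{(i)}\}$, are locally equivalent to $$H_{\alpha\beta}-\frac{H+R}{2}h_{\alpha\beta}=\mathcal{K}\mathcal{T}_{\alpha\beta},\qquad R_{ij}-\frac{H+R}{2}g_{ij}=\mathcal{K}\mathcal{T}_{ij},\qquad -\frac{H+R}{2}h^{\alpha\beta}g_{ij}=\mathcal{K}\mathcal{T}^{(\alpha)(\beta)}_{(i)(j)},$$ $$0=\mathcal{T}_{\alpha i},\quad R_{i\alpha}=\mathcal{K}\mathcal{T}_{i\alpha},\quad 0=\mathcal{T}^{(\alpha)}_{(i)\beta},\quad 0=\mathcal{T}^{\ (\beta)}_{\alpha(i)},\quad 0=\mathcal{T}^{\ (\alpha)}_{i(j)},\quad 0=\mathcal{T}^{(\alpha)}_{(i)j},$$ where $H_{\alpha\beta}=H^\mu_{\alpha\beta\mu}$, $R_{ij}=R^m_{ijm}$, $R_{i\alpha}=R^m_{i\alpha m}$, $H=h^{\alpha\beta}H_{\alpha\beta}$, $R=g^{ij}R_{ij}$.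
   Context: Setting: $T$ is a $p$-dimensional manifold (coordinates $t^\alpha$) with semi-Riemannian metric $h_{\alpha\beta}(t)$ (inverse $h^{\alpha\beta}$, Christoffel symbols $H^\gamma_{\alpha\beta}$); $M$ is $n$-dimensional; on $J^1(T,M)$ (coordinates $(t^\alpha,x^i,x^i_\alpha)$) $L=G^{(\alpha)(\beta)}_{(i)(j)}(t,x)x^i_\alpha x^j_\beta+U^{(\alpha)}_{(i)}(t,x)x^i_\alpha+F(t,x)$ with $G^{(\alpha)(\beta)}_{(i)(j)}=\frac12\partial^2L/\partial x^i_\alpha\partial x^j_\beta$ symmetric, rank $n$, constant signature in $i,j$; $g_{ij}=\frac1p h_{\mu\nu}G^{(\mu)(\nu)}_{(i)(j)}$ with inverse $g^{ij}$ and generalized Christoffel symbols $\Gamma^i_{jk}$ in $x$. Nonlinear connection $M^{(i)}_{(\alpha)\beta}=-H^\gamma_{\alpha\beta}x^i_\gamma$, $N^{(i)}_{(\alpha)j}=\Gamma^i_{jm}x^m_\alpha+\frac{g^{im}}{2}\frac{\partial g_{jm}}{\partial t^\alpha}$; adapted cobasis $dt^\alpha$, $dx^i$, $\delta x^i_\alpha=dx^i_\alpha+M^{(i)}_{(\alpha)\beta}dt^\beta+N^{(i)}_{(\alpha)j}dx^j$; $\frac{\delta}{\delta t^\alpha}=\partial_{t^\alpha}-M^{(j)}_{(\beta)\alpha}\partial_{x^j_\beta}$, $\frac{\delta}{\delta x^i}=\partial_{x^i}-N^{(j)}_{(\beta)i}\partial_{x^j_\beta}$. The gravitational potential is $G=h_{\alpha\beta}dt^\alpha\otimes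 dt^\beta+g_{ij}dx^i\otimes dx^j+h^{\alpha\beta}g_{ij}\delta x^i_\alpha\otimes\delta x^j_\beta$. Cartan connection $C\Gamma$: $H^\gamma_{\alpha\beta}$, $G^k_{j\gamma}=\frac{g^{km}}{2}\frac{\delta g_{mj}}{\delta t^\gamma}$, $L^i_{jk}=\frac{g^{im}}{2}(\frac{\delta g_{jm}}{\delta x^k}+\frac{\delta g_{km}}{\delta x^j}-\frac{\delta g_{jk}}{\delta x^m})$, $C^{i(\gamma)}_{j(k)}=\frac{g^{im}}{2}(\frac{\partial g_{jm}}{\partial x^k_\gamma}+\frac{\partial g_{km}}{\partial x^j_\gamma}-\frac{\partial g_{jk}}{\partial x^m_\gamma})$. Curvatures: $H^\alpha_{\eta\beta\gamma}=\frac{\delta H^\alpha_{\eta\beta}}{\delta t^\gamma}-\frac{\delta H^\alpha_{\eta\gamma}}{\delta t^\beta}+H^\mu_{\eta\beta}H^\alpha_{\mu\gamma}-H^\mu_{\eta\gamma}H^\alpha_{\mu\beta}$; $R^l_{i\beta k}=\frac{\delta G^l_{i\beta}}{\delta x^k}-\frac{\delta L^l_{ik}}{\delta t^\beta}+G^m_{i\beta}L^l_{mk}-L^m_{ik}G^l_{m\beta}+C^{l(\mu)}_{i(m)}R^{(m)}_{(\mu)\beta k}$; $R^l_{ijk}=\frac{\delta L^l_{ij}}{\delta x^k}-\frac{\delta L^l_{ik}}{\delta x^j}+L^m_{ij}L^l_{mk}-L^m_{ik}L^l_{mj}+C^{l(\mu)}_{i(m)}R^{(m)}_{(\mu)jk}$;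 $P^{l\,(\gamma)}_{i\beta(k)}=\frac{\partial G^l_{i\beta}}{\partial x^k_\gamma}-C^{l(\gamma)}_{i(k)/\beta}+C^{l(\mu)}_{i(m)}P^{(m)(\gamma)}_{(\mu)\beta(k)}$; $P^{l\,(\gamma)}_{ij(k)}=\frac{\partial L^l_{ij}}{\partial x^k_\gamma}-C^{l(\gamma)}_{i(k)|j}+C^{l(\mu)}_{i(m)}P^{(m)(\gamma)}_{(\mu)j(k)}$; $S^{l(\beta)(\gamma)}_{i(j)(k)}=\frac{\partial C^{l(\beta)}_{i(j)}}{\partial x^k_\gamma}-\frac{\partial C^{l(\gamma)}_{i(k)}}{\partial x^j_\beta}+C^{m(\beta)}_{i(j)}C^{l(\gamma)}_{m(k)}-C^{m(\gamma)}_{i(k)}C^{l(\beta)}_{m(j)}$, with $R^{(m)}_{(\mu)\beta k}=\frac{\delta M^{(m)}_{(\mu)\beta}}{\delta x^k}-\frac{\delta N^{(m)}_{(\mu)k}}{\delta t^\beta}$, $R^{(m)}_{(\mu)jk}=\frac{\delta N^{(m)}_{(\mu)j}}{\delta x^k}-\frac{\delta N^{(m)}_{(\mu)k}}{\delta x^j}$, $P^{(m)(\gamma)}_{(\mu)\beta(k)}=\frac{\partial M^{(m)}_{(\mu)\beta}}{\partial x^k_\gamma}-\delta^\gamma_\mu G^m_{k\beta}+\delta^m_kH^\gamma_{\mu\beta}$, $P^{(m)(\gamma)}_{(\mu)j(k)}=\frac{\partial N^{(m)}_{(\mu)j}}{\partial x^k_\gamma}-\delta^\gamma_\mu L^m_{jk}$,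 and "$_{/\beta}$", "$_{|j}$" the horizontal covariant derivatives of $C\Gamma$. The Ricci d-tensor is $Ric(C\Gamma)=R_{\alpha\beta}dt^\alpha\otimes dt^\beta+R_{i\alpha}dx^i\otimes dt^\alpha+R_{ij}dx^i\otimes dx^j+R^{\ (\alpha)}_{i(j)}dx^i\otimes\delta x^j_\alpha+R^{(\alpha)}_{(i)\beta}\delta x^i_\alpha\otimes dt^\beta+R^{(\alpha)}_{(i)j}\delta x^i_\alpha\otimes dx^j+R^{(\alpha)(\beta)}_{(i)(j)}\delta x^i_\alpha\otimes\delta x^j_\beta$ (no $dt\otimes dx$ or $dt\otimes\delta x$ components), with $R_{\alpha\beta}=H^\mu_{\alpha\beta\mu}$, $R_{i\alpha}=R^m_{i\alpha m}$, $R_{ij}=R^m_{ijm}$, $R^{\ (\alpha)}_{i(j)}=-P^{m\ (\alpha)}_{im(j)}$, $R^{(\alpha)}_{(i)j}=P^{m\ (\alpha)}_{ij(m)}$, $R^{(\alpha)}_{(i)\beta}=P^{m\ (\alpha)}_{i\beta(m)}$, $R^{(\alpha)(\beta)}_{(i)(j)}=S^{m(\beta)(\alpha)}_{i(j)(m)}$. The scalar curvature is $Sc(C\Gamma)=h^{\alpha\beta}R_{\alpha\beta}+g^{ij}R_{ij}+h_{\alpha\beta}g^{ij}R^{(\alpha)(\beta)}_{(i)(j)}$. The stress-energy d-tensor $\mathcal{T}$ is expanded in the same adapted tensor basis, e.g. $\mathcal{T}_{\alpha i}$ is its $dt^\alpha\otimes dx^i$ component and $\mathcal{T}^{\ (\beta)}_{\alpha(i)}$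 its $dt^\alpha\otimes\delta x^i_\beta$ component. *)

theory Defs
  imports "HOL-Analysis.Analysis"
begin

text \<open>Local-coordinate model of J^1(T,M): a point is (t, x, y) with
  t in R^p (indices of type 'p), x in R^n (indices of type 'n) and
  y in R^(p x n), where  y $ a $ i  is the jet coordinate x^i_a.\<close>

type_synonym ('p,'n) jf = "real^'p \<Rightarrow> real^'n \<Rightarrow> real^'n^'p \<Rightarrow> real"

definition pdt :: "'p::finite \<Rightarrow> ('p,'n::finite) jf \<Rightarrow> ('p,'n) jf" where
  "pdt a f = (\<lambda>t x y. deriv (\<lambda>s. f (t + s *\<^sub>R axis a 1) x y) 0)"

definition pdx :: "'n::finite \<Rightarrow> ('p::finite,'n) jf \<Rightarrow> ('p,'n) jf" where
  "pdx i f = (\<lambda>t x y. deriv (\<lambda>s. f t (x + s *\<^sub>R axis i 1) y) 0)"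

definition pdy :: "'p::finite \<Rightarrow> 'n::finite \<Rightarrow> ('p,'n) jf \<Rightarrow> ('p,'n) jf" where
  "pdy a i f = (\<lambda>t x y. deriv (\<lambda>s. f t x (y + s *\<^sub>R axis a (axis i 1))) 0)"

text \<open>h :: real^'p => real^'p^'p is the metric h_{ab}(t); Gc a b i j t x is
  G^{(a)(b)}_{(i)(j)}(t,x), the coefficient of the quadratic part of L.\<close>

definition hcomp :: "(real^'p \<Rightarrow> real^'p^'p) \<Rightarrow> 'p::finite \<Rightarrow> 'p \<Rightarrow> ('p,'n::finite) jf" where
  "hcomp h a b = (\<lambda>t x y. h t $ a $ b)"

definition hinv :: "(real^'p \<Rightarrow> real^'p^'p) \<Rightarrow> 'p::finite \<Rightarrow> 'p \<Rightarrow> ('p,'n::finite) jf" where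
  "hinv h a b = (\<lambda>t x y. matrix_inv (h t) $ a $ b)"

definition quad_lagr ::
  "('p \<Rightarrow> 'p \<Rightarrow> 'n \<Rightarrow> 'n \<Rightarrow> real^'p \<Rightarrow> real^'n \<Rightarrow> real) \<Rightarrow>
   ('p \<Rightarrow> 'n \<Rightarrow> real^'p \<Rightarrow> real^'n \<Rightarrow> real) \<Rightarrow> (real^'p \<Rightarrow> real^'n \<Rightarrow> real) \<Rightarrow> ('p::finite,'n::finite) jf" where
  "quad_lagr Gc U F = (\<lambda>t x y.
     (\<Sum>a\<in>UNIV. \<Sum>b\<in>UNIV. \<Sum>i\<in>UNIV. \<Sum>j\<in>UNIV. Gc a b i j t x * y $ a $ i * y $ b $ j)
     + (\<Sum>a\<in>UNIV. \<Sum>i\<in>UNIV. U a i t x * y $ a $ i) + F t x)"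

definition gcomp :: "(real^'p \<Rightarrow> real^'p^'p) \<Rightarrow> ('p \<Rightarrow> 'p \<Rightarrow> 'n \<Rightarrow> 'n \<Rightarrow> real^'p \<Rightarrow> real^'n \<Rightarrow> real)
    \<Rightarrow> 'n \<Rightarrow> 'n \<Rightarrow> ('p::finite,'n::finite) jf" where
  "gcomp h Gc i j = (\<lambda>t x y. (1 / real CARD('p)) *
      (\<Sum>m\<in>UNIV. \<Sum>v\<in>UNIV. h t $ m $ v * Gc m v i j t x))"

definition gmat :: "(real^'p \<Rightarrow> real^'p^'p) \<Rightarrow> ('p \<Rightarrow> 'p \<Rightarrow> 'n \<Rightarrow> 'n \<Rightarrow> real^'p \<Rightarrow> real^'n \<Rightarrow> real)
    \<Rightarrow> real^'p \<Rightarrow> real^'n \<Rightarrow> real^'n^'p \<Rightarrow> real^'n^'n" where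
  "gmat h Gc t x y = (\<chi> i j. gcomp h Gc i j t x y)"

definition ginv :: "(real^'p \<Rightarrow> real^'p^'p) \<Rightarrow> ('p \<Rightarrow> 'p \<Rightarrow> 'n \<Rightarrow> 'n \<Rightarrow> real^'p \<Rightarrow> real^'n \<Rightarrow> real)
    \<Rightarrow> 'n \<Rightarrow> 'n \<Rightarrow> ('p::finite,'n::finite) jf" where
  "ginv h Gc i j = (\<lambda>t x y. matrix_inv (gmat h Gc t x y) $ i $ j)"

definition Hc :: "(real^'p \<Rightarrow> real^'p^'p) \<Rightarrow> 'p \<Rightarrow> 'p \<Rightarrow> 'p \<Rightarrow> ('p::finite,'n::finite) jf" where
  "Hc h c a b = (\<lambda>t x y. (1/2) * (\<Sum>m\<in>UNIV. hinv h c m t x y *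
      (pdt a (hcomp h m b) t x y + pdt b (hcomp h m a) t x y - pdt m (hcomp h a b) t x y)))"

definition Gam :: "(real^'p \<Rightarrow> real^'p^'p) \<Rightarrow> ('p \<Rightarrow> 'p \<Rightarrow> 'n \<Rightarrow> 'n \<Rightarrow> real^'p \<Rightarrow> real^'n \<Rightarrow> real)
    \<Rightarrow> 'n \<Rightarrow> 'n \<Rightarrow> 'n \<Rightarrow> ('p::finite,'n::finite) jf" where
  "Gam h Gc i j k = (\<lambda>t x y. (1/2) * (\<Sum>m\<in>UNIV. ginv h Gc i m t x y *
      (pdx k (gcomp h Gc j m) t x y + pdx j (gcomp h Gc k m) t x y - pdx m (gcomp h Gc j k) t x y)))"

text \<open>Mnl h i a b = M^{(i)}_{(a)b};  Nnl h Gc i a j = N^{(i)}_{(a)j}\<close>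
definition Mnl :: "(real^'p \<Rightarrow> real^'p^'p) \<Rightarrow> 'n \<Rightarrow> 'p \<Rightarrow> 'p \<Rightarrow> ('p::finite,'n::finite) jf" where
  "Mnl h i a b = (\<lambda>t x y. - (\<Sum>c\<in>UNIV. Hc h c a b t x y * y $ c $ i))"

definition Nnl :: "(real^'p \<Rightarrow> real^'p^'p) \<Rightarrow> ('p \<Rightarrow> 'p \<Rightarrow> 'n \<Rightarrow> 'n \<Rightarrow> real^'p \<Rightarrow> real^'n \<Rightarrow> real)
    \<Rightarrow> 'n \<Rightarrow> 'p \<Rightarrow> 'n \<Rightarrow> ('p::finite,'n::finite) jf" where
  "Nnl h Gc i a j = (\<lambda>t x y. (\<Sum>m\<in>UNIV. Gam h Gc i j m t x y * y $ a $ m)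
      + (\<Sum>m\<in>UNIV. ginv h Gc i m t x y / 2 * pdt a (gcomp h Gc j m) t x y))"

definition dlt :: "(real^'p \<Rightarrow> real^'p^'p) \<Rightarrow> 'p \<Rightarrow> ('p::finite,'n::finite) jf \<Rightarrow> ('p,'n) jf" where
  "dlt h a f = (\<lambda>t x y. pdt a f t x y -
      (\<Sum>b\<in>UNIV. \<Sum>j\<in>UNIV. Mnl h j b a t x y * pdy b j f t x y))"

definition dlx :: "(real^'p \<Rightarrow> real^'p^'p) \<Rightarrow> ('p \<Rightarrow> 'p \<Rightarrow> 'n \<Rightarrow> 'n \<Rightarrow> real^'p \<Rightarrow> real^'n \<Rightarrow> real)
    \<Rightarrow> 'n \<Rightarrow> ('p::finite,'n::finite) jf \<Rightarrow> ('p,'n) jf" where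
  "dlx h Gc i f = (\<lambda>t x y. pdx i f t x y -
      (\<Sum>b\<in>UNIV. \<Sum>j\<in>UNIV. Nnl h Gc j b i t x y * pdy b j f t x y))"

text \<open>CG k j c = G^k_{jc};  CL i j k = L^i_{jk};  CC i c j k = C^{i(c)}_{j(k)}\<close>
definition CG :: "(real^'p \<Rightarrow> real^'p^'p) \<Rightarrow> ('p \<Rightarrow> 'p \<Rightarrow> 'n \<Rightarrow> 'n \<Rightarrow> real^'p \<Rightarrow> real^'n \<Rightarrow> real)
    \<Rightarrow> 'n \<Rightarrow> 'n \<Rightarrow> 'p \<Rightarrow> ('p::finite,'n::finite) jf" where
  "CG h Gc k j c = (\<lambda>t x y. \<Sum>m\<in>UNIV. ginv h Gc k m t x y / 2 * dlt h c (gcomp h Gc m j) t x y)"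

definition CL :: "(real^'p \<Rightarrow> real^'p^'p) \<Rightarrow> ('p \<Rightarrow> 'p \<Rightarrow> 'n \<Rightarrow> 'n \<Rightarrow> real^'p \<Rightarrow> real^'n \<Rightarrow> real)
    \<Rightarrow> 'n \<Rightarrow> 'n \<Rightarrow> 'n \<Rightarrow> ('p::finite,'n::finite) jf" where
  "CL h Gc i j k = (\<lambda>t x y. \<Sum>m\<in>UNIV. ginv h Gc i m t x y / 2 *
      (dlx h Gc k (gcomp h Gc j m) t x y + dlx h Gc j (gcomp h Gc k m) t x y
       - dlx h Gc m (gcomp h Gc j k) t x y))"

definition CC :: "(real^'p \<Rightarrow> real^'p^'p) \<Rightarrow> ('p \<Rightarrow> 'p \<Rightarrow> 'n \<Rightarrow> 'n \<Rightarrow> real^'p \<Rightarrow> real^'n \<Rightarrow> real)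
    \<Rightarrow> 'n \<Rightarrow> 'p \<Rightarrow> 'n \<Rightarrow> 'n \<Rightarrow> ('p::finite,'n::finite) jf" where
  "CC h Gc i c j k = (\<lambda>t x y. \<Sum>m\<in>UNIV. ginv h Gc i m t x y / 2 *
      (pdy c k (gcomp h Gc j m) t x y + pdy c j (gcomp h Gc k m) t x y
       - pdy c m (gcomp h Gc j k) t x y))"

text \<open>HR h a e b c = H^a_{ebc}\<close>
definition HR :: "(real^'p \<Rightarrow> real^'p^'p) \<Rightarrow> 'p \<Rightarrow> 'p \<Rightarrow> 'p \<Rightarrow> 'p \<Rightarrow> ('p::finite,'n::finite) jf" where
  "HR h a e b c = (\<lambda>t x y. dlt h c (Hc h a e b) t x y - dlt h b (Hc h a e c) t x y
      + (\<Sum>m\<in>UNIV. Hc h m e b t x y * Hc h a m c t x y - Hc h m e c t x y * Hc h a m b t x y))"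

text \<open>RMt m u b k = R^{(m)}_{(u)bk};  RMx m u j k = R^{(m)}_{(u)jk}\<close>
definition RMt :: "(real^'p \<Rightarrow> real^'p^'p) \<Rightarrow> ('p \<Rightarrow> 'p \<Rightarrow> 'n \<Rightarrow> 'n \<Rightarrow> real^'p \<Rightarrow> real^'n \<Rightarrow> real)
    \<Rightarrow> 'n \<Rightarrow> 'p \<Rightarrow> 'p \<Rightarrow> 'n \<Rightarrow> ('p::finite,'n::finite) jf" where
  "RMt h Gc m u b k = (\<lambda>t x y. dlx h Gc k (Mnl h m u b) t x y - dlt h b (Nnl h Gc m u k) t x y)"

definition RMx :: "(real^'p \<Rightarrow> real^'p^'p) \<Rightarrow> ('p \<Rightarrow> 'p \<Rightarrow> 'n \<Rightarrow> 'n \<Rightarrow> real^'p \<Rightarrow> real^'n \<Rightarrow> real)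
    \<Rightarrow> 'n \<Rightarrow> 'p \<Rightarrow> 'n \<Rightarrow> 'n \<Rightarrow> ('p::finite,'n::finite) jf" where
  "RMx h Gc m u j k = (\<lambda>t x y. dlx h Gc k (Nnl h Gc m u j) t x y - dlx h Gc j (Nnl h Gc m u k) t x y)"

text \<open>PMt m c u b k = P^{(m)(c)}_{(u)b(k)};  PMx m c u j k = P^{(m)(c)}_{(u)j(k)}\<close>
definition PMt :: "(real^'p \<Rightarrow> real^'p^'p) \<Rightarrow> ('p \<Rightarrow> 'p \<Rightarrow> 'n \<Rightarrow> 'n \<Rightarrow> real^'p \<Rightarrow> real^'n \<Rightarrow> real)
    \<Rightarrow> 'n \<Rightarrow> 'p \<Rightarrow> 'p \<Rightarrow> 'p \<Rightarrow> 'n \<Rightarrow> ('p::finite,'n::finite) jf" where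
  "PMt h Gc m c u b k = (\<lambda>t x y. pdy c k (Mnl h m u b) t x y
      - (if c = u then CG h Gc m k b t x y else 0) + (if m = k then Hc h c u b t x y else 0))"

definition PMx :: "(real^'p \<Rightarrow> real^'p^'p) \<Rightarrow> ('p \<Rightarrow> 'p \<Rightarrow> 'n \<Rightarrow> 'n \<Rightarrow> real^'p \<Rightarrow> real^'n \<Rightarrow> real)
    \<Rightarrow> 'n \<Rightarrow> 'p \<Rightarrow> 'p \<Rightarrow> 'n \<Rightarrow> 'n \<Rightarrow> ('p::finite,'n::finite) jf" where
  "PMx h Gc m c u j k = (\<lambda>t x y. pdy c k (Nnl h Gc m u j) t x y
      - (if c = u then CL h Gc m j k t x y else 0))"

text \<open>Horizontal covariant derivatives of C: CovT l c i k b = C^{l(c)}_{i(k)/b},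
  CovX l c i k j = C^{l(c)}_{i(k)|j}\<close>
definition CovT :: "(real^'p \<Rightarrow> real^'p^'p) \<Rightarrow> ('p \<Rightarrow> 'p \<Rightarrow> 'n \<Rightarrow> 'n \<Rightarrow> real^'p \<Rightarrow> real^'n \<Rightarrow> real)
    \<Rightarrow> 'n \<Rightarrow> 'p \<Rightarrow> 'n \<Rightarrow> 'n \<Rightarrow> 'p \<Rightarrow> ('p::finite,'n::finite) jf" where
  "CovT h Gc l c i k b = (\<lambda>t x y. dlt h b (CC h Gc l c i k) t x y
      + (\<Sum>m\<in>UNIV. CC h Gc m c i k t x y * CG h Gc l m b t x y)
      - (\<Sum>m\<in>UNIV. CC h Gc l c m k t x y * CG h Gc m i b t x y)
      + (\<Sum>u\<in>UNIV. CC h Gc l u i k t x y * Hc h c u b t x y)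
      - (\<Sum>m\<in>UNIV. CC h Gc l c i m t x y * CG h Gc m k b t x y))"

definition CovX :: "(real^'p \<Rightarrow> real^'p^'p) \<Rightarrow> ('p \<Rightarrow> 'p \<Rightarrow> 'n \<Rightarrow> 'n \<Rightarrow> real^'p \<Rightarrow> real^'n \<Rightarrow> real)
    \<Rightarrow> 'n \<Rightarrow> 'p \<Rightarrow> 'n \<Rightarrow> 'n \<Rightarrow> 'n \<Rightarrow> ('p::finite,'n::finite) jf" where
  "CovX h Gc l c i k j = (\<lambda>t x y. dlx h Gc j (CC h Gc l c i k) t x y
      + (\<Sum>m\<in>UNIV. CC h Gc m c i k t x y * CL h Gc l m j t x y)
      - (\<Sum>m\<in>UNIV. CC h Gc l c m k t x y * CL h Gc m i j t x y)
      - (\<Sum>m\<in>UNIV. CC h Gc l c i m t x y * CL h Gc m k j t x y))"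

text \<open>Rt l i b k = R^l_{ibk};  Rx l i j k = R^l_{ijk}\<close>
definition Rt :: "(real^'p \<Rightarrow> real^'p^'p) \<Rightarrow> ('p \<Rightarrow> 'p \<Rightarrow> 'n \<Rightarrow> 'n \<Rightarrow> real^'p \<Rightarrow> real^'n \<Rightarrow> real)
    \<Rightarrow> 'n \<Rightarrow> 'n \<Rightarrow> 'p \<Rightarrow> 'n \<Rightarrow> ('p::finite,'n::finite) jf" where
  "Rt h Gc l i b k = (\<lambda>t x y. dlx h Gc k (CG h Gc l i b) t x y - dlt h b (CL h Gc l i k) t x y
      + (\<Sum>m\<in>UNIV. CG h Gc m i b t x y * CL h Gc l m k t x y - CL h Gc m i k t x y * CG h Gc l m b t x y)
      + (\<Sum>u\<in>UNIV. \<Sum>m\<in>UNIV. CC h Gc l u i m t x y * RMt h Gc m u b k t x y))"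

definition Rx :: "(real^'p \<Rightarrow> real^'p^'p) \<Rightarrow> ('p \<Rightarrow> 'p \<Rightarrow> 'n \<Rightarrow> 'n \<Rightarrow> real^'p \<Rightarrow> real^'n \<Rightarrow> real)
    \<Rightarrow> 'n \<Rightarrow> 'n \<Rightarrow> 'n \<Rightarrow> 'n \<Rightarrow> ('p::finite,'n::finite) jf" where
  "Rx h Gc l i j k = (\<lambda>t x y. dlx h Gc k (CL h Gc l i j) t x y - dlx h Gc j (CL h Gc l i k) t x y
      + (\<Sum>m\<in>UNIV. CL h Gc m i j t x y * CL h Gc l m k t x y - CL h Gc m i k t x y * CL h Gc l m j t x y)
      + (\<Sum>u\<in>UNIV. \<Sum>m\<in>UNIV. CC h Gc l u i m t x y * RMx h Gc m u j k t x y))"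

text \<open>Pt l i b c k = P^{l(c)}_{ib(k)};  Px l i j c k = P^{l(c)}_{ij(k)}\<close>
definition Pt :: "(real^'p \<Rightarrow> real^'p^'p) \<Rightarrow> ('p \<Rightarrow> 'p \<Rightarrow> 'n \<Rightarrow> 'n \<Rightarrow> real^'p \<Rightarrow> real^'n \<Rightarrow> real)
    \<Rightarrow> 'n \<Rightarrow> 'n \<Rightarrow> 'p \<Rightarrow> 'p \<Rightarrow> 'n \<Rightarrow> ('p::finite,'n::finite) jf" where
  "Pt h Gc l i b c k = (\<lambda>t x y. pdy c k (CG h Gc l i b) t x y - CovT h Gc l c i k b t x y
      + (\<Sum>u\<in>UNIV. \<Sum>m\<in>UNIV. CC h Gc l u i m t x y * PMt h Gc m c u b k t x y))"

definition Px :: "(real^'p \<Rightarrow> real^'p^'p) \<Rightarrow> ('p \<Rightarrow> 'p \<Rightarrow> 'n \<Rightarrow> 'n \<Rightarrow> real^'p \<Rightarrow> real^'n \<Rightarrow> real)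
    \<Rightarrow> 'n \<Rightarrow> 'n \<Rightarrow> 'n \<Rightarrow> 'p \<Rightarrow> 'n \<Rightarrow> ('p::finite,'n::finite) jf" where
  "Px h Gc l i j c k = (\<lambda>t x y. pdy c k (CL h Gc l i j) t x y - CovX h Gc l c i k j t x y
      + (\<Sum>u\<in>UNIV. \<Sum>m\<in>UNIV. CC h Gc l u i m t x y * PMx h Gc m c u j k t x y))"

text \<open>Sv l b c i j k = S^{l(b)(c)}_{i(j)(k)}\<close>
definition Sv :: "(real^'p \<Rightarrow> real^'p^'p) \<Rightarrow> ('p \<Rightarrow> 'p \<Rightarrow> 'n \<Rightarrow> 'n \<Rightarrow> real^'p \<Rightarrow> real^'n \<Rightarrow> real)
    \<Rightarrow> 'n \<Rightarrow> 'p \<Rightarrow> 'p \<Rightarrow> 'n \<Rightarrow> 'n \<Rightarrow> 'n \<Rightarrow> ('p::finite,'n::finite) jf" where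
  "Sv h Gc l b c i j k = (\<lambda>t x y. pdy c k (CC h Gc l b i j) t x y - pdy b j (CC h Gc l c i k) t x y
      + (\<Sum>m\<in>UNIV. CC h Gc m b i j t x y * CC h Gc l c m k t x y - CC h Gc m c i k t x y * CC h Gc l b m j t x y))"

definition Ric_tt :: "(real^'p \<Rightarrow> real^'p^'p) \<Rightarrow> 'p \<Rightarrow> 'p \<Rightarrow> ('p::finite,'n::finite) jf" where
  "Ric_tt h a b = (\<lambda>t x y. \<Sum>u\<in>UNIV. HR h u a b u t x y)"

definition Ric_xt :: "(real^'p \<Rightarrow> real^'p^'p) \<Rightarrow> ('p \<Rightarrow> 'p \<Rightarrow> 'n \<Rightarrow> 'n \<Rightarrow> real^'p \<Rightarrow> real^'n \<Rightarrow> real)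
    \<Rightarrow> 'n \<Rightarrow> 'p \<Rightarrow> ('p::finite,'n::finite) jf" where
  "Ric_xt h Gc i a = (\<lambda>t x y. \<Sum>m\<in>UNIV. Rt h Gc m i a m t x y)"

definition Ric_xx :: "(real^'p \<Rightarrow> real^'p^'p) \<Rightarrow> ('p \<Rightarrow> 'p \<Rightarrow> 'n \<Rightarrow> 'n \<Rightarrow> real^'p \<Rightarrow> real^'n \<Rightarrow> real)
    \<Rightarrow> 'n \<Rightarrow> 'n \<Rightarrow> ('p::finite,'n::finite) jf" where
  "Ric_xx h Gc i j = (\<lambda>t x y. \<Sum>m\<in>UNIV. Rx h Gc m i j m t x y)"

text \<open>Ric_xv i a j = R_{i(j)}^{(a)} = - P^{m (a)}_{im(j)}\<close>
definition Ric_xv :: "(real^'p \<Rightarrow> real^'p^'p) \<Rightarrow> ('p \<Rightarrow> 'p \<Rightarrow> 'n \<Rightarrow> 'n \<Rightarrow> real^'p \<Rightarrow> real^'n \<Rightarrow> real)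
    \<Rightarrow> 'n \<Rightarrow> 'p \<Rightarrow> 'n \<Rightarrow> ('p::finite,'n::finite) jf" where
  "Ric_xv h Gc i a j = (\<lambda>t x y. - (\<Sum>m\<in>UNIV. Px h Gc m i m a j t x y))"

text \<open>Ric_vx a i j = R^{(a)}_{(i)j} = P^{m (a)}_{ij(m)}\<close>
definition Ric_vx :: "(real^'p \<Rightarrow> real^'p^'p) \<Rightarrow> ('p \<Rightarrow> 'p \<Rightarrow> 'n \<Rightarrow> 'n \<Rightarrow> real^'p \<Rightarrow> real^'n \<Rightarrow> real)
    \<Rightarrow> 'p \<Rightarrow> 'n \<Rightarrow> 'n \<Rightarrow> ('p::finite,'n::finite) jf" where
  "Ric_vx h Gc a i j = (\<lambda>t x y. \<Sum>m\<in>UNIV. Px h Gc m i j a m t x y)"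

text \<open>Ric_vt a i b = R^{(a)}_{(i)b} = P^{m (a)}_{ib(m)}\<close>
definition Ric_vt :: "(real^'p \<Rightarrow> real^'p^'p) \<Rightarrow> ('p \<Rightarrow> 'p \<Rightarrow> 'n \<Rightarrow> 'n \<Rightarrow> real^'p \<Rightarrow> real^'n \<Rightarrow> real)
    \<Rightarrow> 'p \<Rightarrow> 'n \<Rightarrow> 'p \<Rightarrow> ('p::finite,'n::finite) jf" where
  "Ric_vt h Gc a i b = (\<lambda>t x y. \<Sum>m\<in>UNIV. Pt h Gc m i b a m t x y)"

text \<open>Ric_vv a i b j = R^{(a)(b)}_{(i)(j)} = S^{m(b)(a)}_{i(j)(m)}\<close>
definition Ric_vv :: "(real^'p \<Rightarrow> real^'p^'p) \<Rightarrow> ('p \<Rightarrow> 'p \<Rightarrow> 'n \<Rightarrow> 'n \<Rightarrow> real^'p \<Rightarrow> real^'n \<Rightarrow> real)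
    \<Rightarrow> 'p \<Rightarrow> 'n \<Rightarrow> 'p \<Rightarrow> 'n \<Rightarrow> ('p::finite,'n::finite) jf" where
  "Ric_vv h Gc a i b j = (\<lambda>t x y. \<Sum>m\<in>UNIV. Sv h Gc m b a i j m t x y)"

definition Scal :: "(real^'p \<Rightarrow> real^'p^'p) \<Rightarrow> ('p \<Rightarrow> 'p \<Rightarrow> 'n \<Rightarrow> 'n \<Rightarrow> real^'p \<Rightarrow> real^'n \<Rightarrow> real)
    \<Rightarrow> ('p::finite,'n::finite) jf" where
  "Scal h Gc = (\<lambda>t x y.
      (\<Sum>a\<in>UNIV. \<Sum>b\<in>UNIV. hinv h a b t x y * Ric_tt h a b t x y)
    + (\<Sum>i\<in>UNIV. \<Sum>j\<in>UNIV. ginv h Gc i j t x y * Ric_xx h Gc i j t x y)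
    + (\<Sum>a\<in>UNIV. \<Sum>b\<in>UNIV. \<Sum>i\<in>UNIV. \<Sum>j\<in>UNIV.
         hcomp h a b t x y * ginv h Gc i j t x y * Ric_vv h Gc a i b j t x y))"

definition Hscal :: "(real^'p \<Rightarrow> real^'p^'p) \<Rightarrow> ('p::finite,'n::finite) jf" where
  "Hscal h = (\<lambda>t x y. \<Sum>a\<in>UNIV. \<Sum>b\<in>UNIV. hinv h a b t x y * Ric_tt h a b t x y)"

definition Rscal :: "(real^'p \<Rightarrow> real^'p^'p) \<Rightarrow> ('p \<Rightarrow> 'p \<Rightarrow> 'n \<Rightarrow> 'n \<Rightarrow> real^'p \<Rightarrow> real^'n \<Rightarrow> real)
    \<Rightarrow> ('p::finite,'n::finite) jf" where
  "Rscal h Gc = (\<lambda>t x y. \<Sum>i\<in>UNIV. \<Sum>j\<in>UNIV. ginv h Gc i j t x y * Ric_xx h Gc i j t x y)"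

text \<open>Adapted components of a d-tensor on J^1(T,M):
  Ttt a b   : dt^a (x) dt^b          Ttx a i   : dt^a (x) dx^i
  Ttv a b i : dt^a (x) dx^i_b  (T_{a(i)}^{(b)})
  Txt i a   : dx^i (x) dt^a          Txx i j   : dx^i (x) dx^j
  Txv i a j : dx^i (x) dx^j_a  (T_{i(j)}^{(a)})
  Tvt a i b : dx^i_a (x) dt^b  (T^{(a)}_{(i)b})
  Tvx a i j : dx^i_a (x) dx^j  (T^{(a)}_{(i)j})
  Tvv a i b j : dx^i_a (x) dx^j_b (T^{(a)(b)}_{(i)(j)})\<close>
record ('p,'n) dtensor =
  Ttt :: "'p \<Rightarrow> 'p \<Rightarrow> ('p,'n) jf"
  Ttx :: "'p \<Rightarrow> 'n \<Rightarrow> ('p,'n) jf"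
  Ttv :: "'p \<Rightarrow> 'p \<Rightarrow> 'n \<Rightarrow> ('p,'n) jf"
  Txt :: "'n \<Rightarrow> 'p \<Rightarrow> ('p,'n) jf"
  Txx :: "'n \<Rightarrow> 'n \<Rightarrow> ('p,'n) jf"
  Txv :: "'n \<Rightarrow> 'p \<Rightarrow> 'n \<Rightarrow> ('p,'n) jf"
  Tvt :: "'p \<Rightarrow> 'n \<Rightarrow> 'p \<Rightarrow> ('p,'n) jf"
  Tvx :: "'p \<Rightarrow> 'n \<Rightarrow> 'n \<Rightarrow> ('p,'n) jf"
  Tvv :: "'p \<Rightarrow> 'n \<Rightarrow> 'p \<Rightarrow> 'n \<Rightarrow> ('p,'n) jf"

text \<open>The global equation Ric(C Gamma) - Sc/2 G = K T at the point (t,x,y), written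
  component-wise in the adapted basis (Ric has no dt(x)dx, dt(x)dx_a components;
  G has only the dt(x)dt, dx(x)dx and dx_a(x)dx_b blocks).\<close>
definition gen_einstein ::
  "(real^'p \<Rightarrow> real^'p^'p) \<Rightarrow> ('p \<Rightarrow> 'p \<Rightarrow> 'n \<Rightarrow> 'n \<Rightarrow> real^'p \<Rightarrow> real^'n \<Rightarrow> real) \<Rightarrow> real
   \<Rightarrow> ('p::finite,'n::finite) dtensor \<Rightarrow> real^'p \<Rightarrow> real^'n \<Rightarrow> real^'n^'p \<Rightarrow> bool" where
  "gen_einstein h Gc K T t x y \<longleftrightarrow>
     (\<forall>a b. Ric_tt h a b t x y - Scal h Gc t x y / 2 * hcomp h a b t x y = K * Ttt T a b t x y)
   \<and> (\<forall>a i. 0 = K * Ttx T a i t x y)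
   \<and> (\<forall>a b i. 0 = K * Ttv T a b i t x y)
   \<and> (\<forall>i a. Ric_xt h Gc i a t x y = K * Txt T i a t x y)
   \<and> (\<forall>i j. Ric_xx h Gc i j t x y - Scal h Gc t x y / 2 * gcomp h Gc i j t x y = K * Txx T i j t x y)
   \<and> (\<forall>i a j. Ric_xv h Gc i a j t x y = K * Txv T i a j t x y)
   \<and> (\<forall>a i b. Ric_vt h Gc a i b t x y = K * Tvt T a i b t x y)
   \<and> (\<forall>a i j. Ric_vx h Gc a i j t x y = K * Tvx T a i j t x y)
   \<and> (\<forall>a i b j. Ric_vv h Gc a i b j t x y
        - Scal h Gc t x y / 2 * (hinv h a b t x y * gcomp h Gc i j t x y) = K * Tvv T a i b j t x y)"

definition local_einstein ::
  "(real^'p \<Rightarrow> real^'p^'p) \<Rightarrow> ('p \<Rightarrow> 'p \<Rightarrow> 'n \<Rightarrow> 'n \<Rightarrow> real^'p \<Rightarrow> real^'n \<Rightarrow> real) \<Rightarrow> real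
   \<Rightarrow> ('p::finite,'n::finite) dtensor \<Rightarrow> real^'p \<Rightarrow> real^'n \<Rightarrow> real^'n^'p \<Rightarrow> bool" where
  "local_einstein h Gc K T t x y \<longleftrightarrow>
     (\<forall>a b. Ric_tt h a b t x y - (Hscal h t x y + Rscal h Gc t x y) / 2 * hcomp h a b t x y
            = K * Ttt T a b t x y)
   \<and> (\<forall>i j. Ric_xx h Gc i j t x y - (Hscal h t x y + Rscal h Gc t x y) / 2 * gcomp h Gc i j t x y
            = K * Txx T i j t x y)
   \<and> (\<forall>a i b j. - (Hscal h t x y + Rscal h Gc t x y) / 2 * (hinv h a b t x y * gcomp h Gc i j t x y)
            = K * Tvv T a i b j t x y)
   \<and> (\<forall>a i. 0 = Ttx T a i t x y)
   \<and> (\<forall>i a. Ric_xt h Gc i a t x y = K * Txt T i a t x y)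
   \<and> (\<forall>a i b. 0 = Tvt T a i b t x y)
   \<and> (\<forall>a b i. 0 = Ttv T a b i t x y)
   \<and> (\<forall>i a j. 0 = Txv T i a j t x y)
   \<and> (\<forall>a i j. 0 = Tvx T a i j t x y)"

end

theory Submission
  imports Defs
begin

text \<open>The metric g_{ij}(t,x) does not depend on the jet coordinates y. Hence the vertical
  connection coefficients C vanish, and L, G are again independent of y. Consequently every
  curvature term built from C or from y-derivatives of L and G vanishes: the vertical Ricci
  block S and the mixed P blocks are zero. The scalar curvature reduces to H + R, the
  mixed Einstein equations read 0 = K T, and since K is nonzero these are T = 0.\<close>

definition y_independent :: "('p::finite,'n::finite) jf \<Rightarrow> bool" where
  "y_independent f \<longleftrightarrow> (\<forall>t x y y'. f t x y = f t x y')"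

lemma pdy_eq_0_if_y_independent:
  assumes "y_independent f"
  shows "pdy c k f t x y = 0"
proof -
  have "(\<lambda>s. f t x (y + s *\<^sub>R axis c (axis k 1))) = (\<lambda>s. f t x y)"
    using assms by (auto simp: y_independent_def)
  then show ?thesis by (simp add: pdy_def)
qed

lemma y_independentE:
  assumes "y_independent f"
  obtains g where "f = (\<lambda>t x y. g t x)"
proof
  show "f = (\<lambda>t x y. f t x 0)"
    using assms unfolding y_independent_def by blast
qed

lemma y_independent_pdx: "y_independent f \<Longrightarrow> y_independent (pdx i f)"
  by (elim y_independentE) (simp add: y_independent_def pdx_def)

lemma y_independent_pdt: "y_independent f \<Longrightarrow> y_independent (pdt a f)"
  by (elim y_independentE) (simp add: y_independent_def pdt_def)

lemma dlx_eq_pdx_if_y_independent: "y_independent f \<Longrightarrow> dlx h Gc i f = pdx i f"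
  by (intro ext) (simp add: dlx_def pdy_eq_0_if_y_independent)

lemma dlt_eq_pdt_if_y_independent: "y_independent f \<Longrightarrow> dlt h a f = pdt a f"
  by (intro ext) (simp add: dlt_def pdy_eq_0_if_y_independent)

lemma y_independent_gcomp: "y_independent (gcomp h Gc i j)"
  by (simp add: y_independent_def gcomp_def)

lemma y_independent_ginv: "y_independent (ginv h Gc i j)"
  by (simp add: y_independent_def ginv_def gmat_def gcomp_def)

lemma y_independent_CL: "y_independent (CL h Gc i j k)"
  unfolding y_independent_def
proof (intro allI)
  fix t x y y'
  note ginv_eq = y_independent_ginv[unfolded y_independent_def, rule_format, where y = y and y' = y']
  note pdx_eq = y_independent_pdx[OF y_independent_gcomp,
      unfolded y_independent_def, rule_format, where y = y and y' = y']
  show "CL h Gc i j k t x y = CL h Gc i j k t x y'"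
    unfolding CL_def dlx_eq_pdx_if_y_independent[OF y_independent_gcomp]
    by (simp only: ginv_eq pdx_eq)
qed

lemma y_independent_CG: "y_independent (CG h Gc k j c)"
  unfolding y_independent_def
proof (intro allI)
  fix t x y y'
  note ginv_eq = y_independent_ginv[unfolded y_independent_def, rule_format, where y = y and y' = y']
  note pdt_eq = y_independent_pdt[OF y_independent_gcomp,
      unfolded y_independent_def, rule_format, where y = y and y' = y']
  show "CG h Gc k j c t x y = CG h Gc k j c t x y'"
    unfolding CG_def dlt_eq_pdt_if_y_independent[OF y_independent_gcomp]
    by (simp only: ginv_eq pdt_eq)
qed

lemma CC_eq_0: "CC h Gc i c j k = (\<lambda>t x y. 0)"
  by (intro ext) (simp add: CC_def pdy_eq_0_if_y_independent[OF y_independent_gcomp])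

lemma Sv_eq_0: "Sv h Gc l b c i j k t x y = 0"
  by (simp add: Sv_def CC_eq_0 pdy_def)

lemma CovX_eq_0: "CovX h Gc l c i k j t x y = 0"
  by (simp add: CovX_def CC_eq_0 dlx_def pdx_def pdy_def)

lemma CovT_eq_0: "CovT h Gc l c i k b t x y = 0"
  by (simp add: CovT_def CC_eq_0 dlt_def pdt_def pdy_def)

lemma Px_eq_0: "Px h Gc l i j c k t x y = 0"
  by (simp add: Px_def CovX_eq_0 CC_eq_0 pdy_eq_0_if_y_independent[OF y_independent_CL])

lemma Pt_eq_0: "Pt h Gc l i b c k t x y = 0"
  by (simp add: Pt_def CovT_eq_0 CC_eq_0 pdy_eq_0_if_y_independent[OF y_independent_CG])

lemma Ric_vv_eq_0: "Ric_vv h Gc a i b j t x y = 0"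
  by (simp add: Ric_vv_def Sv_eq_0)

lemma Ric_xv_eq_0: "Ric_xv h Gc i a j t x y = 0"
  by (simp add: Ric_xv_def Px_eq_0)

lemma Ric_vx_eq_0: "Ric_vx h Gc a i j t x y = 0"
  by (simp add: Ric_vx_def Px_eq_0)

lemma Ric_vt_eq_0: "Ric_vt h Gc a i b t x y = 0"
  by (simp add: Ric_vt_def Pt_eq_0)

lemma Scal_eq_Hscal_plus_Rscal: "Scal h Gc t x y = Hscal h t x y + Rscal h Gc t x y"
  by (simp add: Scal_def Hscal_def Rscal_def Ric_vv_eq_0)

theorem mainTheorem5:
  fixes h :: "real^'p::finite \<Rightarrow> real^'p^'p"
    and Gc :: "'p \<Rightarrow> 'p \<Rightarrow> 'n::finite \<Rightarrow> 'n \<Rightarrow> real^'p \<Rightarrow> real^'n \<Rightarrow> real"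
    and K :: real
    and T :: "('p,'n) dtensor"
  assumes h_sym: "\<forall>t. transpose (h t) = h t"
    and h_nondeg: "\<forall>t. invertible (h t)"
    and G_sym: "\<forall>a b i j t x. Gc a b i j t x = Gc b a j i t x"
    and g_nondeg: "\<forall>t x y. invertible (gmat h Gc t x y)"
    and K_nz: "K \<noteq> 0"
  shows "\<forall>t x y. gen_einstein h Gc K T t x y \<longleftrightarrow> local_einstein h Gc K T t x y"
proof -
  have vanishing_T: "0 = K * z \<longleftrightarrow> 0 = z" for z :: real
    using K_nz by simp
  show ?thesis
    unfolding gen_einstein_def local_einstein_def Scal_eq_Hscal_plus_Rscal vanishing_T
      Ric_vv_eq_0 Ric_xv_eq_0 Ric_vx_eq_0 Ric_vt_eq_0
      diff_0 minus_divide_left[symmetric] mult_minus_left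
    by (intro allI iffI; elim conjE; intro conjI; assumption)
qed

end
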